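(* Let $D,K\in\mathbb{N}$ and let $A_1,A_2,a,\varepsilon>0$ be real numbers with $a<1\leq A_1<A_2$. Let $\{d_n\}_{n\in\mathbb{N}}$ be a sequence of natural numbers and write $D_n=\prod_{i=1}^{n}d_i$. For $i=1,\ldots,K$, let $\{\alpha_{i,n}\}_{n\in\mathbb{N}}$ and $\{b_{i,n}\}_{n\in\mathbb{N}}$ be sequences of complex numbers such that: (1) $|\alpha_{1,n}|<|\alpha_{1,n+1}|$ for all $n\in\mathbb{N}$; (2) $|\alpha_{1,n}|\geq n^{1+\varepsilon}$ for all $n\in\mathbb{N}$; (3) $\liminf_{n\to\infty}|\alpha_{1,n}|^{1/(D^n\prod_{i=1}^{n-1}(KD_i+d_i))}=A_1$; (4) $\limsup_{n\to\infty}|\alpha_{1,n}|^{1/(D^n\prod_{i=1}^{n-1}(KD_i+d_i))}=A_2$; (5) for all $n\in\mathbb{N}$ and all $1<i\leq K$: $2^{-(\log_2|\alpha_{1,n}|)^a}<\frac{|\alpha_{1,n}|}{|\alpha_{i,n}|}<2^{(\log_2|\alpha_{1,n}|)^a}$; (6) for all $n\in\mathbb{N}$ and all $1\leq i\leq K$: $|b_{i,n}|\leq 2^{(\log_2|\alpha_{1,n}|)^a}$. Let $\beta_1,\ldots,\beta_K\in\mathbb{Z}$, not all $0$, and write $\gamma(N)=\sum_{j=1}^{K}\beta_j\sum_{n=N+1}^{\infty}\frac{b_{j,n}}{\alpha_{j,n}}$. Let $c\in(a,1)$. Then $$\liminf_{N\to\infty}|\gamma(N)|\left(2^{D^{cN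}\prod_{i=1}^{N-1}(KD_i+d_i)^{c}}\prod_{n=1}^{N}|\alpha_{1,n}|^{K}\right)^{DD_N}=0.$$
   Context: $\mathbb{N}=\{1,2,3,\ldots\}$; empty products equal $1$. *)

theory Defs
  imports Complex_Main "HOL-Library.Extended_Real" "HOL-Library.Liminf_Limsup"
begin

definition Dprod :: "(nat \<Rightarrow> nat) \<Rightarrow> nat \<Rightarrow> nat" where
  "Dprod d n = (\<Prod>i=1..n. d i)"

definition Pprod :: "nat \<Rightarrow> (nat \<Rightarrow> nat) \<Rightarrow> nat \<Rightarrow> nat" where
  "Pprod K d n = (\<Prod>i=1..n-1. K * Dprod d i + d i)"

definition gamma :: "nat \<Rightarrow> (nat \<Rightarrow> int) \<Rightarrow> (nat \<Rightarrow> nat \<Rightarrow> complex) \<Rightarrow> (nat \<Rightarrow> nat \<Rightarrow> complex) \<Rightarrow> nat \<Rightarrow> complex" where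
  "gamma K \<beta> b \<alpha> N =
     (\<Sum>j=1..K. of_int (\<beta> j) * (\<Sum>m. b j (m + N + 1) / \<alpha> j (m + N + 1)))"

end

(*
  Write lam n = log2 |alpha 1 n|, E n = D^n P n (P n the product in hypothesis (3)),
  L n = lam n / E n and s N = (lam 1 + ... + lam N) / E N.  The weight in the statement is
  2 powr W N with W N = D D_N (D^(cN) P_N^c + K E_N s_N).  Since
  s (N + 1) = L (N + 1) + (E N / E (N + 1)) s N and E N / E (N + 1) converges, hypotheses (3)
  and (4) (liminf L < limsup L) say that s does not converge.

  If the liminf were positive, |gamma N| 2^(W N) would eventually exceed some eta > 0.  The
  terms of gamma N are at most 2^(2 lam n ^ a - lam n), so some term of the tail, of index
  n = N + 1 + m, satisfies lam n <= W N + 2 lam n ^ a + O(log (m + 1)); as W N is about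
  E (N + 1) s N, this bounds lam n by O(E (N + 1) (s N + e N)) with a geometric error e N.
  For bounded m this gives s (N + 1) <= s N + e N.  For large m the m + 1 terms after N are all
  at most lam n while E at least doubles at each step, so s stays within a constant factor of
  s N + e N up to index N + m + 1 and has dropped below a quarter of it there.  Such a
  stepwise descent forces s to converge, a contradiction.
*)

theory Submission
  imports Defs "HOL-Analysis.Summation_Tests"
begin

lemma powr_le_linear_plus_const:
  fixes a t :: real
  assumes "0 < a" "a < 1" "0 < t"
  shows "\<exists>C\<ge>0. \<forall>y\<ge>0. y powr a \<le> t * y + C"
proof -
  define y0 where "y0 = (1/t) powr (1 / (1 - a))"
  have "y powr a \<le> t * y + y0 powr a" if y: "y \<ge> 0" for y
  proof (cases "y \<le> y0")
    case True
    then have "y powr a \<le> y0 powr a"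
      using y assms by (intro powr_mono2) auto
    then show ?thesis using mult_nonneg_nonneg[of t y] assms y by linarith
  next
    case False
    then have "y > 0" using powr_ge_zero[of "1/t" "1 / (1 - a)"] unfolding y0_def by linarith
    have "1 / t = y0 powr (1 - a)"
      using assms unfolding y0_def by (simp add: powr_powr)
    also have "\<dots> < y powr (1 - a)"
      using False assms by (intro powr_less_mono2) (auto simp: y0_def)
    finally have "1 \<le> t * y powr (1 - a)" using assms by (simp add: field_simps)
    then have "y powr a \<le> t * y powr (1 - a) * y powr a"
      using mult_right_mono[of 1 _ "y powr a"] by simp
    also have "\<dots> = t * y" using \<open>y > 0\<close> by (simp add: mult.assoc powr_add[symmetric])
    finally show ?thesis using powr_ge_zero[of y0 a] by linarith
  qed
  then show ?thesis by (intro exI[of _ "y0 powr a"]) auto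
qed

lemma power_powr_commute: "0 \<le> x \<Longrightarrow> (x ^ n) powr p = (x powr p) ^ n"
  for x :: real
  by (induction n) (simp_all add: powr_mult)

lemma powr_log_eq:
  fixes x p :: real
  assumes "0 < x" shows "2 powr (p * log 2 x) = x powr p"
proof -
  have "2 powr (p * log 2 x) = (2 powr log 2 x) powr p"
    by (simp add: powr_powr mult.commute)
  then show ?thesis using assms by simp
qed

lemma half_plus_mult_div_pow2_le:
  fixes \<Theta> :: real
  assumes "0 \<le> \<Theta>" "1 \<le> r"
  shows "(1/2 + real r * \<Theta>) / 2 ^ (r - 1) \<le> 1 + \<Theta>"
proof -
  have "r \<le> 2 ^ (r - 1)" using Suc_leI[OF less_exp[of "r - 1"]] assms(2) by simp
  then have "real r \<le> 2 ^ (r - 1)" by (metis of_nat_le_iff of_nat_numeral of_nat_power)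
  then have "real r * \<Theta> \<le> 2 ^ (r - 1) * \<Theta>" using assms(1) by (intro mult_right_mono)
  moreover have "(1::real) \<le> 2 ^ (r - 1)" by simp
  ultimately have "1/2 + real r * \<Theta> \<le> 2 ^ (r - 1) + 2 ^ (r - 1) * \<Theta>"
    by linarith
  then show ?thesis by (simp add: divide_le_eq algebra_simps)
qed

lemma square_le_pow2: "4 \<le> r \<Longrightarrow> (r::nat)\<^sup>2 \<le> 2 ^ r"
proof (induction r rule: dec_induct)
  case (step r)
  have "4 * r \<le> r * r" using step(1) by simp
  moreover have "(Suc r)\<^sup>2 = r * r + (2 * r + 1)" by (simp add: power2_eq_square)
  ultimately have "(Suc r)\<^sup>2 \<le> 2 * r\<^sup>2"
    using step(1) unfolding power2_eq_square by linarith
  then show ?case using step(3) by simp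
qed simp

lemma half_plus_mult_div_pow2_le_quarter:
  fixes \<Theta> :: real
  assumes "0 \<le> \<Theta>" "8 * \<Theta> + 4 \<le> real r"
  shows "(1/2 + real r * \<Theta>) / 2 ^ (r - 1) \<le> 1/4"
proof -
  have "4 \<le> r" using assms by simp
  then have "real r * real r \<le> 2 ^ r"
    using square_le_pow2 by (simp add: power2_eq_square flip: of_nat_mult of_nat_le_iff)
  moreover have "real r * (8 * \<Theta> + 4) \<le> real r * real r"
    using assms by (intro mult_left_mono) auto
  moreover have "(2::real) ^ r = 2 * 2 ^ (r - 1)"
    using \<open>4 \<le> r\<close> by (cases r) auto
  ultimately have "4 * (1/2 + real r * \<Theta>) \<le> 2 ^ (r - 1)"
    using \<open>4 \<le> r\<close> by (simp add: algebra_simps)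
  then show ?thesis by (simp add: divide_le_eq)
qed

lemma liminf_eq_0_if_frequently_less:
  fixes f :: "nat \<Rightarrow> real"
  assumes nonneg: "\<And>n. 0 \<le> f n" and small: "\<And>\<eta>. 0 < \<eta> \<Longrightarrow> \<exists>\<^sub>F n in sequentially. f n < \<eta>"
  shows "liminf (\<lambda>n. ereal (f n)) = 0"
proof (rule antisym)
  show "liminf (\<lambda>n. ereal (f n)) \<le> 0"
  proof (rule ccontr)
    assume "\<not> liminf (\<lambda>n. ereal (f n)) \<le> 0"
    then have "0 < liminf (\<lambda>n. ereal (f n))"
      by (simp only: not_le)
    then obtain \<eta> where \<eta>: "0 < ereal \<eta>" "ereal \<eta> < liminf (\<lambda>n. ereal (f n))"
      using ereal_dense2 by blast
    have "\<forall>\<^sub>F n in sequentially. \<not> f n < \<eta>"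
      using less_LiminfD[OF \<eta>(2)] by (rule eventually_mono) simp
    moreover have "\<exists>\<^sub>F n in sequentially. f n < \<eta>"
      using \<eta>(1) by (intro small) simp
    ultimately show False
      by (simp add: frequently_def)
  qed
  show "0 \<le> liminf (\<lambda>n. ereal (f n))"
    using nonneg by (intro Liminf_bounded always_eventually allI) simp
qed

lemma Dprod_Suc: "Dprod d (Suc n) = Dprod d n * d (Suc n)"
  unfolding Dprod_def by (simp add: prod.nat_ivl_Suc')

lemma Dprod_ge_1: "\<forall>n\<ge>1. 1 \<le> d n \<Longrightarrow> 1 \<le> Dprod d n"
  unfolding Dprod_def by (intro prod_ge_1) auto

lemma Pprod_Suc: "1 \<le> n \<Longrightarrow> Pprod K d (Suc n) = Pprod K d n * (K * Dprod d n + d n)"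
  unfolding Pprod_def by (cases n) (auto simp: prod.nat_ivl_Suc')

lemma Pprod_ge_1: "\<forall>n\<ge>1. 1 \<le> d n \<Longrightarrow> 1 \<le> Pprod K d n"
  unfolding Pprod_def by (intro prod_ge_1) (auto simp: Suc_le_eq intro: trans_le_add2)

lemma incseq_Dprod: assumes "\<forall>n\<ge>1. 1 \<le> d n" shows "incseq (\<lambda>n. real (Dprod d n))"
proof (intro incseq_SucI)
  fix n
  have "Dprod d n \<le> Dprod d (Suc n)"
    unfolding Dprod_Suc using assms by simp
  then show "real (Dprod d n) \<le> real (Dprod d (Suc n))"
    by simp
qed

lemma tendsto_1_if_Dprod_convergent:
  assumes d: "\<forall>n\<ge>1. 1 \<le> d n" and lim: "(\<lambda>n. real (Dprod d n)) \<longlonglongrightarrow> l"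
  shows "(\<lambda>n. real (d n)) \<longlonglongrightarrow> 1"
proof -
  have "(\<lambda>n. real (Dprod d (Suc n)) - real (Dprod d n)) \<longlonglongrightarrow> l - l"
    by (intro tendsto_diff LIMSEQ_Suc lim)
  then have diff: "(\<lambda>n. real (Dprod d (Suc n)) - real (Dprod d n)) \<longlonglongrightarrow> 0"
    by simp
  have "real (d (Suc n)) - 1 \<le> real (Dprod d (Suc n)) - real (Dprod d n)" for n
    using mult_right_mono[of 1 "real (Dprod d n)" "real (d (Suc n)) - 1"] Dprod_ge_1[OF d, of n] d
    by (simp add: Dprod_Suc algebra_simps)
  then have "(\<lambda>n. real (d (Suc n)) - 1) \<longlonglongrightarrow> 0"
    using d by (intro tendsto_sandwich[OF _ _ tendsto_const diff]) auto
  then have "(\<lambda>n. real (d (Suc n))) \<longlonglongrightarrow> 1"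
    by (rule LIM_zero_cancel)
  then show ?thesis
    by (rule LIMSEQ_imp_Suc)
qed

lemma convergent_inverse_K_Dprod_plus:
  fixes d :: "nat \<Rightarrow> nat"
  assumes K: "1 \<le> K" and d: "\<forall>n\<ge>1. 1 \<le> d n"
  shows "convergent (\<lambda>n. 1 / (real K * real (Dprod d n) + real (d n)))"
proof (cases "bdd_above (range (\<lambda>n. real (Dprod d n)))")
  case True
  then obtain B where "\<forall>n. real (Dprod d n) \<le> B"
    by (auto simp: bdd_above_def)
  then obtain l where l: "(\<lambda>n. real (Dprod d n)) \<longlonglongrightarrow> l"
    using incseq_convergent[OF incseq_Dprod[OF d]] by blast
  have "1 \<le> l"
    using LIMSEQ_le_const[OF l, of 1] Dprod_ge_1[OF d] by simp
  then have "0 < real K * l + 1"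
    using zero_le_mult_iff[of "real K" l] by linarith
  then have "(\<lambda>n. 1 / (real K * real (Dprod d n) + real (d n))) \<longlonglongrightarrow> 1 / (real K * l + 1)"
    by (intro tendsto_intros l tendsto_1_if_Dprod_convergent[OF d l]) auto
  then show ?thesis
    unfolding convergent_def by blast
next
  case False
  have Dprod_lim: "filterlim (\<lambda>n. real (Dprod d n)) at_top sequentially"
    unfolding filterlim_at_top eventually_sequentially
  proof
    fix Z
    obtain n0 where n0: "Z < real (Dprod d n0)"
      using False unfolding bdd_above_def by (auto simp: not_le)
    have "Z \<le> real (Dprod d n)" if "n0 \<le> n" for n
      using n0 incseqD[OF incseq_Dprod[OF d] that] by linarith
    then show "\<exists>n0. \<forall>n\<ge>n0. Z \<le> real (Dprod d n)"
      by blast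
  qed
  have Dprod_le: "real (Dprod d n) \<le> real K * real (Dprod d n) + real (d n)" for n
    using mult_right_mono[of 1 "real K" "real (Dprod d n)"] K by simp
  have "filterlim (\<lambda>n. real K * real (Dprod d n) + real (d n)) at_top sequentially"
    using Dprod_le by (intro filterlim_at_top_mono[OF Dprod_lim] always_eventually) blast
  then have "(\<lambda>n. 1 / (real K * real (Dprod d n) + real (d n))) \<longlonglongrightarrow> 0"
    using tendsto_inverse_0_at_top by (simp add: inverse_eq_divide)
  then show ?thesis
    unfolding convergent_def by blast
qed

section \<open>Convergence by stepwise descent\<close>

locale stepwise_descent =
  fixes s e :: "nat \<Rightarrow> real" and q R :: real and N0 :: nat and J :: "nat \<Rightarrow> nat"
  assumes s_nonneg: "0 \<le> s n"
    and e_nonneg: "0 \<le> e n"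
    and e_Suc_le: "e (Suc n) \<le> q * e n"
    and q_nonneg: "0 \<le> q" and q_less_1: "q < 1"
    and R_ge_1: "1 \<le> R"
    and step_ge_1: "N0 \<le> N \<Longrightarrow> 1 \<le> J N"
    and step_bounded: "N0 \<le> N \<Longrightarrow> 1 \<le> r \<Longrightarrow> r \<le> J N \<Longrightarrow> s (N + r) \<le> R * (s N + e N)"
    and step_end: "N0 \<le> N \<Longrightarrow> s (N + J N) \<le> s N + e N"
    and long_step_end: "N0 \<le> N \<Longrightarrow> J N \<noteq> 1 \<Longrightarrow> s (N + J N) \<le> (s N + e N) / 4"
begin

lemma e_antimono: "m \<le> n \<Longrightarrow> e n \<le> e m"
proof (induction n rule: dec_induct)
  case (step n)
  have "e (Suc n) \<le> q * e n" by (rule e_Suc_le)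
  also have "\<dots> \<le> e n" using e_nonneg[of n] q_less_1 by (simp add: mult_left_le_one_le q_nonneg)
  finally show ?case using step(3) by simp
qed simp

lemma e_le_power: "e n \<le> q ^ n * e 0"
proof (induction n)
  case (Suc n)
  have "e (Suc n) \<le> q * e n" by (rule e_Suc_le)
  also have "\<dots> \<le> q * (q ^ n * e 0)" using Suc q_nonneg by (rule mult_left_mono)
  finally show ?case by simp
qed simp

lemma e_tendsto_0: "e \<longlonglongrightarrow> 0"
proof (rule tendsto_sandwich[OF _ _ tendsto_const])
  show "(\<lambda>n. q ^ n * e 0) \<longlonglongrightarrow> 0"
    using q_nonneg q_less_1 by (intro tendsto_mult_left_zero LIMSEQ_power_zero) simp
qed (use e_nonneg e_le_power in auto)

text \<open>Along the steps the potential \<open>\<Phi> = s + e / (1 - q)\<close> does not increase, and a long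
  step shrinks it to a quarter up to \<open>e\<close>.  So either almost all steps are unit steps and
  \<open>\<Phi>\<close>, hence \<open>s\<close>, converges, or \<open>\<Phi>\<close> tends to \<open>0\<close> along the checkpoints and so does \<open>s\<close>.\<close>

definition "\<kappa> = 1 / (1 - q)"

definition "\<Phi> n = s n + \<kappa> * e n"

lemma kappa_ge_1: "1 \<le> \<kappa>"
  unfolding \<kappa>_def using q_nonneg q_less_1 by simp

lemma kappa_eq: "1 + \<kappa> * q = \<kappa>"
  unfolding \<kappa>_def using q_less_1 by (simp add: field_simps)

lemma Phi_nonneg: "0 \<le> \<Phi> n"
  unfolding \<Phi>_def using s_nonneg e_nonneg kappa_ge_1 by simp

lemma s_plus_e_le_Phi: "s n + e n \<le> \<Phi> n"
  unfolding \<Phi>_def using e_nonneg[of n] kappa_ge_1 by (simp add: mult_le_cancel_right1)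

lemma Phi_step: assumes "N0 \<le> N" shows "\<Phi> (N + J N) \<le> \<Phi> N"
proof -
  have "e (N + J N) \<le> e (Suc N)" using step_ge_1[OF assms] by (intro e_antimono) simp
  also have "\<dots> \<le> q * e N" by (rule e_Suc_le)
  finally have "\<kappa> * e (N + J N) \<le> \<kappa> * q * e N"
    using kappa_ge_1 by (simp add: mult.assoc mult_left_mono)
  moreover have "e N + \<kappa> * q * e N = \<kappa> * e N"
    using kappa_eq by (metis distrib_right mult_1)
  ultimately show ?thesis unfolding \<Phi>_def using step_end[OF assms] by linarith
qed

lemma Phi_long_step:
  assumes "N0 \<le> N" "J N \<noteq> 1"
  shows "\<Phi> (N + J N) \<le> \<Phi> N / 4 + \<kappa> * e N"
proof -
  have "\<kappa> * e (N + J N) \<le> \<kappa> * e N"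
    using kappa_ge_1 by (intro mult_left_mono e_antimono) auto
  moreover have "(s N + e N) / 4 \<le> \<Phi> N / 4"
    using s_plus_e_le_Phi[of N] by simp
  ultimately show ?thesis
    using long_step_end[OF assms] unfolding \<Phi>_def[of "N + J N"] by linarith
qed

lemma s_within_step:
  assumes "N0 \<le> N" "r < J N"
  shows "s (N + r) \<le> R * \<Phi> N"
proof (cases "r = 0")
  case True
  have "s N \<le> \<Phi> N" using s_plus_e_le_Phi[of N] e_nonneg[of N] by linarith
  also have "\<dots> \<le> R * \<Phi> N" using R_ge_1 Phi_nonneg[of N] by (simp add: mult_le_cancel_right1)
  finally show ?thesis using True by simp
next
  case False
  then have "s (N + r) \<le> R * (s N + e N)" using assms by (intro step_bounded) auto
  also have "\<dots> \<le> R * \<Phi> N" using R_ge_1 s_plus_e_le_Phi by (intro mult_left_mono) auto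
  finally show ?thesis .
qed

primrec checkpoint :: "nat \<Rightarrow> nat" where
  "checkpoint 0 = N0"
| "checkpoint (Suc i) = checkpoint i + J (checkpoint i)"

lemma checkpoint_ge: "N0 \<le> checkpoint i"
  by (induction i) auto

lemma strict_mono_checkpoint: "strict_mono checkpoint"
  unfolding strict_mono_Suc_iff using step_ge_1[OF checkpoint_ge] by (simp add: Suc_le_eq)

lemma checkpoint_cover: "N0 \<le> m \<Longrightarrow> \<exists>k. checkpoint k \<le> m \<and> m < checkpoint (Suc k)"
proof (induction m rule: dec_induct)
  case base
  show ?case using step_ge_1[of N0] by (intro exI[of _ 0]) auto
next
  case (step m)
  then obtain k where k: "checkpoint k \<le> m" "m < checkpoint (Suc k)" by blast
  show ?case
  proof (cases "Suc m < checkpoint (Suc k)")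
    case True
    then show ?thesis using k by (intro exI[of _ k]) simp
  next
    case False
    then have "Suc m = checkpoint (Suc k)" using k by simp
    then show ?thesis
      using strict_mono_checkpoint by (intro exI[of _ "Suc k"]) (simp add: strict_mono_Suc_iff del: checkpoint.simps)
  qed
qed

lemma s_le_Phi_checkpoint:
  assumes "checkpoint k \<le> m" "m < checkpoint (Suc k)"
  shows "s m \<le> R * \<Phi> (checkpoint k)"
  using s_within_step[OF checkpoint_ge, of "m - checkpoint k" k] assms by simp

lemma decseq_Phi_checkpoint: "decseq (\<lambda>i. \<Phi> (checkpoint i))"
  by (intro decseq_SucI) (simp add: Phi_step checkpoint_ge)

lemma convergent_if_eventually_unit_steps:
  assumes "\<forall>i\<ge>i0. J (checkpoint i) = 1"
  shows "convergent s"
proof -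
  define m0 where "m0 = checkpoint i0"
  have checkpoint_shift: "checkpoint (i0 + k) = m0 + k" for k
  proof (induction k)
    case (Suc k)
    have "J (checkpoint (i0 + k)) = 1" using assms by simp
    then show ?case using Suc by simp
  qed (simp add: m0_def)
  have unit_step: "J m = 1" if "m0 \<le> m" for m
    using assms checkpoint_shift[of "m - m0"] that by (metis le_add1 le_add_diff_inverse)
  have "decseq (\<lambda>k. \<Phi> (k + m0))"
  proof (intro decseq_SucI)
    fix k
    show "\<Phi> (Suc k + m0) \<le> \<Phi> (k + m0)"
      using Phi_step[of "k + m0"] unit_step[of "k + m0"] checkpoint_ge[of i0]
      by (simp add: m0_def)
  qed
  then obtain l where "(\<lambda>k. \<Phi> (k + m0)) \<longlonglongrightarrow> l"
    using decseq_convergent Phi_nonneg by blast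
  then have "\<Phi> \<longlonglongrightarrow> l"
    by (rule LIMSEQ_offset)
  then have "(\<lambda>n. \<Phi> n - \<kappa> * e n) \<longlonglongrightarrow> l - \<kappa> * 0"
    by (intro tendsto_intros e_tendsto_0)
  then show ?thesis
    unfolding \<Phi>_def convergent_def by auto
qed

lemma Phi_checkpoint_tendsto_0:
  assumes "\<forall>i0. \<exists>i\<ge>i0. J (checkpoint i) \<noteq> 1"
  shows "(\<lambda>i. \<Phi> (checkpoint i)) \<longlonglongrightarrow> 0"
proof -
  obtain \<mu> where \<mu>: "(\<lambda>i. \<Phi> (checkpoint i)) \<longlonglongrightarrow> \<mu>" "\<forall>i. \<mu> \<le> \<Phi> (checkpoint i)"
    using decseq_convergent[OF decseq_Phi_checkpoint] Phi_nonneg by blast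
  have "\<mu> \<le> 0"
  proof (rule ccontr)
    assume "\<not> \<mu> \<le> 0"
    have "\<forall>\<^sub>F i in sequentially. \<Phi> (checkpoint i) < 3/2 * \<mu>"
      using \<mu>(1) \<open>\<not> \<mu> \<le> 0\<close> by (intro order_tendstoD(2)) auto
    moreover have "\<forall>\<^sub>F i in sequentially. \<kappa> * e i < \<mu> / 8"
      using tendsto_mult_right_zero[OF e_tendsto_0] \<open>\<not> \<mu> \<le> 0\<close> by (intro order_tendstoD(2)) auto
    ultimately have "\<forall>\<^sub>F i in sequentially. \<Phi> (checkpoint i) < 3/2 * \<mu> \<and> \<kappa> * e i < \<mu> / 8"
      by (rule eventually_conj)
    then obtain i0 where i0: "\<And>i. i0 \<le> i \<Longrightarrow> \<Phi> (checkpoint i) < 3/2 * \<mu> \<and> \<kappa> * e i < \<mu> / 8"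
      unfolding eventually_at_top_linorder by blast
    obtain i where i: "i0 \<le> i" "J (checkpoint i) \<noteq> 1"
      using assms by blast
    have "\<kappa> * e (checkpoint i) \<le> \<kappa> * e i"
      using kappa_ge_1 seq_suble[OF strict_mono_checkpoint]
      by (intro mult_left_mono e_antimono) auto
    then have "\<Phi> (checkpoint (Suc i)) < \<mu>"
      using Phi_long_step[OF checkpoint_ge i(2)] i0[OF i(1)] \<open>\<not> \<mu> \<le> 0\<close> by simp
    then show False using \<mu>(2)[rule_format, of "Suc i"] by simp
  qed
  moreover have "0 \<le> \<mu>"
    using Phi_nonneg by (intro LIMSEQ_le_const[OF \<mu>(1)]) auto
  ultimately show ?thesis
    using \<mu>(1) by simp
qed

lemma tendsto_0_if_frequently_long_steps:
  assumes "\<forall>i0. \<exists>i\<ge>i0. J (checkpoint i) \<noteq> 1"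
  shows "s \<longlonglongrightarrow> 0"
proof (rule order_tendstoI)
  fix a :: real
  assume "0 < a"
  then obtain i0 where i0: "\<Phi> (checkpoint i0) < a / R"
    using order_tendstoD(2)[OF Phi_checkpoint_tendsto_0[OF assms], of "a / R"] R_ge_1
    by (auto simp: eventually_at_top_linorder)
  show "\<forall>\<^sub>F m in sequentially. s m < a"
    unfolding eventually_at_top_linorder
  proof (intro exI allI impI)
    fix m
    assume m: "checkpoint i0 \<le> m"
    then obtain k where k: "checkpoint k \<le> m" "m < checkpoint (Suc k)"
      using checkpoint_cover checkpoint_ge[of i0] order.trans by blast
    have "i0 \<le> k"
      using k(2) m strict_mono_less_eq[OF strict_mono_checkpoint, of "Suc k" i0] by linarith
    have "s m \<le> R * \<Phi> (checkpoint k)" by (rule s_le_Phi_checkpoint[OF k])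
    also have "\<dots> \<le> R * \<Phi> (checkpoint i0)"
      using decseq_Phi_checkpoint \<open>i0 \<le> k\<close> R_ge_1 by (intro mult_left_mono) (auto simp: decseq_def)
    also have "\<dots> < a" using i0 R_ge_1 by (simp add: field_simps)
    finally show "s m < a" .
  qed
qed (use s_nonneg in \<open>auto intro: always_eventually less_le_trans\<close>)

theorem convergent: "convergent s"
proof (cases "\<exists>i0. \<forall>i\<ge>i0. J (checkpoint i) = 1")
  case True
  then show ?thesis using convergent_if_eventually_unit_steps by blast
next
  case False
  then show ?thesis using tendsto_0_if_frequently_long_steps convergent_def by auto
qed

end

lemma convergent_by_stepwise_descent:
  fixes s e :: "nat \<Rightarrow> real"
  assumes "\<And>n. 0 \<le> s n" "\<And>n. 0 \<le> e n" "\<And>n. e (Suc n) \<le> q * e n" "0 \<le> q" "q < 1" "1 \<le> R"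
    and steps: "\<And>N. N0 \<le> N \<Longrightarrow> \<exists>j\<ge>1. (\<forall>r\<in>{1..j}. s (N + r) \<le> R * (s N + e N))
                  \<and> s (N + j) \<le> s N + e N \<and> (j \<noteq> 1 \<longrightarrow> s (N + j) \<le> (s N + e N) / 4)"
  shows "convergent s"
proof -
  obtain J where J: "\<And>N. N0 \<le> N \<Longrightarrow> 1 \<le> J N \<and> (\<forall>r\<in>{1..J N}. s (N + r) \<le> R * (s N + e N))
                  \<and> s (N + J N) \<le> s N + e N \<and> (J N \<noteq> 1 \<longrightarrow> s (N + J N) \<le> (s N + e N) / 4)"
    using steps by metis
  interpret stepwise_descent s e q R N0 J
    using assms J by unfold_locales auto
  show ?thesis by (rule convergent)
qed

section \<open>The normalised partial sums of the exponents\<close>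

locale gamma_setting =
  fixes D K :: nat and a \<epsilon> c :: real
    and d :: "nat \<Rightarrow> nat"
    and \<alpha> b :: "nat \<Rightarrow> nat \<Rightarrow> complex"
    and \<beta> :: "nat \<Rightarrow> int"
  assumes D_ge_1: "1 \<le> D" and K_ge_1: "1 \<le> K"
    and a_pos: "0 < a" and a_less_c: "a < c" and c_less_1: "c < 1" and eps_pos: "0 < \<epsilon>"
    and d_ge_1: "\<forall>n\<ge>1. 1 \<le> d n"
    and alpha1_increasing: "\<forall>n\<ge>1. norm (\<alpha> 1 n) < norm (\<alpha> 1 (n + 1))"
    and alpha1_ge: "\<forall>n\<ge>1. real n powr (1 + \<epsilon>) \<le> norm (\<alpha> 1 n)"
    and root_limsup_finite:
      "limsup (\<lambda>n. ereal (norm (\<alpha> 1 n) powr (1 / (real D ^ n * real (Pprod K d n))))) < \<infinity>"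
    and root_liminf_less_limsup:
      "liminf (\<lambda>n. ereal (norm (\<alpha> 1 n) powr (1 / (real D ^ n * real (Pprod K d n)))))
        < limsup (\<lambda>n. ereal (norm (\<alpha> 1 n) powr (1 / (real D ^ n * real (Pprod K d n)))))"
    and alpha_ratio: "\<forall>n\<ge>1. \<forall>i. 1 < i \<and> i \<le> K \<longrightarrow>
               2 powr (- ((log 2 (norm (\<alpha> 1 n))) powr a)) < norm (\<alpha> 1 n) / norm (\<alpha> i n) \<and>
               norm (\<alpha> 1 n) / norm (\<alpha> i n) < 2 powr ((log 2 (norm (\<alpha> 1 n))) powr a)"
    and b_bound: "\<forall>n\<ge>1. \<forall>i. 1 \<le> i \<and> i \<le> K \<longrightarrow>
               norm (b i n) \<le> 2 powr ((log 2 (norm (\<alpha> 1 n))) powr a)"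
    and beta_nonzero: "\<exists>j\<in>{1..K}. \<beta> j \<noteq> 0"
begin

definition "lam n = log 2 (norm (\<alpha> 1 n))"
definition "E n = real D ^ n * real (Pprod K d n)"
definition "S n = (\<Sum>i=1..n. lam i)"
definition "s n = S n / E n"
definition "L n = lam n / E n"

lemma norm_alpha1_ge_1: "1 \<le> n \<Longrightarrow> 1 \<le> norm (\<alpha> 1 n)"
  using alpha1_ge ge_one_powr_ge_zero[of "real n" "1 + \<epsilon>"] eps_pos by force

lemma norm_alpha1_eq: "1 \<le> n \<Longrightarrow> norm (\<alpha> 1 n) = 2 powr lam n"
  using norm_alpha1_ge_1[of n] unfolding lam_def by (intro powr_log_cancel[symmetric]) auto

lemma lam_nonneg: "1 \<le> n \<Longrightarrow> 0 \<le> lam n"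
  using norm_alpha1_ge_1[of n] unfolding lam_def by (intro zero_le_log_cancel_iff[THEN iffD2]) auto

lemma lam_ge_log: assumes "1 \<le> n" shows "(1 + \<epsilon>) * log 2 (real n) \<le> lam n"
proof -
  have "log 2 (real n powr (1 + \<epsilon>)) \<le> lam n"
    unfolding lam_def using alpha1_ge assms by (intro log_mono) auto
  then show ?thesis using assms by (simp add: log_powr)
qed

lemma lam_mono: assumes "1 \<le> m" "m \<le> n" shows "lam m \<le> lam n"
proof -
  have "norm (\<alpha> 1 m) \<le> norm (\<alpha> 1 n)"
    using assms(2)
  proof (induction n rule: dec_induct)
    case (step n)
    have "norm (\<alpha> 1 n) < norm (\<alpha> 1 (n + 1))"
      using alpha1_increasing assms(1) step(1) by simp
    then show ?case using step(3) by simp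
  qed simp
  then show ?thesis unfolding lam_def using norm_alpha1_ge_1[OF assms(1)] by (intro log_mono) auto
qed

lemma E_ge_1: "1 \<le> E n"
proof -
  have "1 * 1 \<le> real D ^ n * real (Pprod K d n)"
    using D_ge_1 Pprod_ge_1[OF d_ge_1, of K n] by (intro mult_mono) auto
  then show ?thesis unfolding E_def by simp
qed

lemma E_Suc: "1 \<le> n \<Longrightarrow> E (Suc n) = E n * (real D * (real K * real (Dprod d n) + real (d n)))"
  unfolding E_def by (simp add: Pprod_Suc)

lemma factor_ge_2: assumes "1 \<le> n" shows "2 \<le> K * Dprod d n + d n"
proof -
  have "1 \<le> K * Dprod d n"
    using K_ge_1 Dprod_ge_1[OF d_ge_1, of n] by (simp add: one_le_mult_iff)
  moreover have "1 \<le> d n"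
    using d_ge_1 assms by blast
  ultimately show ?thesis
    by linarith
qed

lemma step_factor_ge_2: assumes "1 \<le> n" shows "2 \<le> real D * (real K * real (Dprod d n) + real (d n))"
proof -
  have "2 \<le> K * Dprod d n + d n"
    by (rule factor_ge_2[OF assms])
  also have "\<dots> \<le> D * (K * Dprod d n + d n)"
    using D_ge_1 by simp
  finally show ?thesis
    by (metis of_nat_add of_nat_le_iff of_nat_mult of_nat_numeral)
qed

lemma Pprod_Suc_ge_power: "2 ^ n \<le> real (Pprod K d (Suc n))"
proof (induction n)
  case 0
  then show ?case by (simp add: Pprod_def)
next
  case (Suc n)
  have "(2::real) ^ Suc n = 2 ^ n * 2" by (rule power_Suc2)
  also have "\<dots> \<le> real (Pprod K d (Suc n)) * real (K * Dprod d (Suc n) + d (Suc n))"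
    using Suc factor_ge_2[of "Suc n"] by (intro mult_mono) (simp_all del: of_nat_add of_nat_mult)
  also have "\<dots> = real (Pprod K d (Suc (Suc n)))"
    using Pprod_Suc[of "Suc n"] by simp
  finally show ?case .
qed

lemma E_double: assumes "1 \<le> n" shows "2 * E n \<le> E (Suc n)"
proof -
  have "E n * 2 \<le> E n * (real D * (real K * real (Dprod d n) + real (d n)))"
    using step_factor_ge_2[OF assms] E_ge_1[of n] by (intro mult_left_mono) auto
  then show ?thesis using E_Suc[OF assms] by (metis mult.commute)
qed

lemma E_shift: "1 \<le> n \<Longrightarrow> 2 ^ r * E n \<le> E (n + r)"
proof (induction r)
  case (Suc r)
  have "2 ^ Suc r * E n = 2 * (2 ^ r * E n)" by simp
  then show ?case using Suc E_double[of "n + r"] by simp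
qed simp

lemma E_Suc_ge_power: "2 ^ n \<le> E (Suc n)"
proof -
  have "2 ^ n * 1 \<le> 2 ^ n * E 1"
    using E_ge_1[of 1] by (intro mult_left_mono) auto
  then show ?thesis using order.trans[OF _ E_shift[of 1 n, OF order.refl]] by simp
qed

lemma root_eq:
  assumes "1 \<le> n"
  shows "norm (\<alpha> 1 n) powr (1 / (real D ^ n * real (Pprod K d n))) = 2 powr L n"
proof -
  have "norm (\<alpha> 1 n) powr (1 / E n) = (2 powr lam n) powr (1 / E n)"
    by (simp only: norm_alpha1_eq[OF assms])
  then show ?thesis unfolding L_def E_def by (simp add: powr_powr)
qed

lemma S_nonneg: "0 \<le> S n"
  unfolding S_def using lam_nonneg by (intro sum_nonneg) auto

lemma s_nonneg: "0 \<le> s n"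
  unfolding s_def using S_nonneg E_ge_1[of n] by simp

lemma s_Suc: "s (Suc n) = L (Suc n) + E n / E (Suc n) * s n"
  using E_ge_1[of n] unfolding s_def L_def S_def by (simp add: add_divide_distrib)

lemma S_add_le: "r \<le> j \<Longrightarrow> S (N + r) \<le> S N + real r * lam (N + j)"
proof (induction r)
  case (Suc r)
  have "lam (Suc (N + r)) \<le> lam (N + j)"
    using Suc.prems by (intro lam_mono) auto
  then show ?case
    using Suc by (simp add: S_def algebra_simps)
qed simp

lemma s_bounded: "\<exists>nb Sb. \<forall>n\<ge>nb. s n \<le> Sb"
proof -
  obtain k :: nat where
    "limsup (\<lambda>n. ereal (norm (\<alpha> 1 n) powr (1 / (real D ^ n * real (Pprod K d n))))) < ereal (real k)"
    using root_limsup_finite less_PInf_Ex_of_nat by auto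
  define \<Lambda> where "\<Lambda> = log 2 (real k + 1)"
  have "\<forall>\<^sub>F n in sequentially. norm (\<alpha> 1 n) powr (1 / (real D ^ n * real (Pprod K d n))) < real k"
    using Limsup_lessD[OF \<open>limsup _ < _\<close>] by simp
  then have "\<forall>\<^sub>F n in sequentially. L n < \<Lambda>"
    using eventually_ge_at_top[of 1]
  proof eventually_elim
    case (elim n)
    then have "2 powr L n < 2 powr \<Lambda>" unfolding \<Lambda>_def root_eq[OF elim(2)] by simp
    then show ?case by simp
  qed
  then obtain n1 where n1: "\<And>n. n1 \<le> n \<Longrightarrow> L n < \<Lambda>"
    unfolding eventually_at_top_linorder by blast
  define n0 where "n0 = max n1 1"
  have "s n \<le> max (s n0) (2 * \<Lambda>)" if "n0 \<le> n" for n
    using that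
  proof (induction n rule: dec_induct)
    case (step n)
    have "1 \<le> n" using step(1) unfolding n0_def by simp
    then have "E n / E (Suc n) \<le> 1/2"
      using E_double[of n] E_ge_1[of "Suc n"] by (simp add: divide_le_eq)
    then have "E n / E (Suc n) * s n \<le> 1/2 * max (s n0) (2 * \<Lambda>)"
      using step(3) s_nonneg[of n] E_ge_1[of n] E_ge_1[of "Suc n"] by (intro mult_mono) auto
    moreover have "L (Suc n) < \<Lambda>" using n1 step(1) unfolding n0_def by simp
    ultimately show ?case unfolding s_Suc by linarith
  qed simp
  then show ?thesis by blast
qed

lemma E_ratio_eq:
  "1 \<le> n \<Longrightarrow> E n / E (Suc n) = 1 / real D * (1 / (real K * real (Dprod d n) + real (d n)))"
  using E_Suc[of n] E_ge_1[of n] by simp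

lemma convergent_E_ratio: "convergent (\<lambda>n. E n / E (Suc n))"
proof -
  obtain l where "(\<lambda>n. 1 / (real K * real (Dprod d n) + real (d n))) \<longlonglongrightarrow> l"
    using convergent_inverse_K_Dprod_plus[OF K_ge_1 d_ge_1] unfolding convergent_def by blast
  then have "(\<lambda>n. 1 / real D * (1 / (real K * real (Dprod d n) + real (d n)))) \<longlonglongrightarrow> 1 / real D * l"
    by (rule tendsto_mult_left)
  then have "(\<lambda>n. E n / E (Suc n)) \<longlonglongrightarrow> 1 / real D * l"
    by (rule Lim_transform_eventually)
      (use eventually_ge_at_top[of 1] in \<open>eventually_elim, simp add: E_ratio_eq\<close>)
  then show ?thesis unfolding convergent_def by blast
qed

lemma not_convergent_s: "\<not> convergent s"
proof
  assume "convergent s"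
  then obtain \<sigma> where \<sigma>: "s \<longlonglongrightarrow> \<sigma>"
    unfolding convergent_def by blast
  obtain \<tau> where \<tau>: "(\<lambda>n. E n / E (Suc n)) \<longlonglongrightarrow> \<tau>"
    using convergent_E_ratio unfolding convergent_def by blast
  have "(\<lambda>n. s (Suc n) - E n / E (Suc n) * s n) \<longlonglongrightarrow> \<sigma> - \<tau> * \<sigma>"
    by (intro tendsto_intros LIMSEQ_Suc \<sigma> \<tau>)
  then have "(\<lambda>n. L (Suc n)) \<longlonglongrightarrow> \<sigma> - \<tau> * \<sigma>"
    by (simp add: s_Suc)
  then have "L \<longlonglongrightarrow> \<sigma> - \<tau> * \<sigma>"
    by (rule LIMSEQ_imp_Suc)
  then have "(\<lambda>n. ereal (2 powr L n)) \<longlonglongrightarrow> ereal (2 powr (\<sigma> - \<tau> * \<sigma>))"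
    by (auto intro!: tendsto_intros)
  moreover have "\<forall>\<^sub>F n in sequentially.
      ereal (2 powr L n) = ereal (norm (\<alpha> 1 n) powr (1 / (real D ^ n * real (Pprod K d n))))"
    using eventually_ge_at_top[of 1] by eventually_elim (simp only: root_eq)
  ultimately have root_lim: "(\<lambda>n. ereal (norm (\<alpha> 1 n) powr (1 / (real D ^ n * real (Pprod K d n)))))
      \<longlonglongrightarrow> ereal (2 powr (\<sigma> - \<tau> * \<sigma>))"
    by (rule Lim_transform_eventually)
  have "liminf (\<lambda>n. ereal (norm (\<alpha> 1 n) powr (1 / (real D ^ n * real (Pprod K d n)))))
      = limsup (\<lambda>n. ereal (norm (\<alpha> 1 n) powr (1 / (real D ^ n * real (Pprod K d n)))))"
    using lim_imp_Liminf[OF trivial_limit_sequentially root_lim]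
      lim_imp_Limsup[OF trivial_limit_sequentially root_lim] by (rule trans[OF _ sym])
  then show False
    using root_liminf_less_limsup by (simp only: less_irrefl)
qed

definition "\<theta> = \<epsilon> / (2 * (1 + \<epsilon>))"

lemma theta_pos: "0 < \<theta>"
  unfolding \<theta>_def using eps_pos by simp

lemma theta_less_1: "\<theta> < 1"
  unfolding \<theta>_def using eps_pos by simp

definition "u n = 2 powr (2 * lam n powr a - lam n)"

lemma u_le_power:
  assumes n: "1 \<le> n" and C: "\<forall>y\<ge>0. y powr a \<le> \<theta> / 4 * y + C"
  shows "u n \<le> 2 powr (2 * C) * real n powr - (1 + 3 * \<epsilon> / 4)"
proof -
  have "2 * lam n powr a - lam n \<le> 2 * (\<theta> / 4 * lam n + C) - lam n"
    using C lam_nonneg[OF n] by auto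
  also have "\<dots> = 2 * C - (1 - \<theta> / 2) * lam n"
    by (simp add: algebra_simps)
  also have "\<dots> \<le> 2 * C - (1 - \<theta> / 2) * ((1 + \<epsilon>) * log 2 (real n))"
    using lam_ge_log[OF n] theta_less_1 by (intro diff_left_mono mult_left_mono) auto
  also have "(1 - \<theta> / 2) * ((1 + \<epsilon>) * log 2 (real n)) = (1 + 3 * \<epsilon> / 4) * log 2 (real n)"
    unfolding \<theta>_def using eps_pos by (simp add: field_simps)
  finally have "2 * lam n powr a - lam n \<le> 2 * C - (1 + 3 * \<epsilon> / 4) * log 2 (real n)" .
  then have "u n \<le> 2 powr (2 * C - (1 + 3 * \<epsilon> / 4) * log 2 (real n))"
    unfolding u_def by (intro powr_mono) auto
  also have "\<dots> = 2 powr (2 * C) / 2 powr ((1 + 3 * \<epsilon> / 4) * log 2 (real n))"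
    by (rule powr_diff)
  also have "2 powr ((1 + 3 * \<epsilon> / 4) * log 2 (real n)) = real n powr (1 + 3 * \<epsilon> / 4)"
    using n by (intro powr_log_eq) simp
  also have "2 powr (2 * C) / real n powr (1 + 3 * \<epsilon> / 4) = 2 powr (2 * C) * real n powr - (1 + 3 * \<epsilon> / 4)"
    by (simp only: powr_minus divide_inverse)
  finally show ?thesis .
qed

lemma summable_u: "summable u"
proof -
  obtain C where C: "\<forall>y\<ge>0. y powr a \<le> \<theta> / 4 * y + C"
    using powr_le_linear_plus_const[of a "\<theta> / 4"] a_pos a_less_c c_less_1 theta_pos by auto
  show ?thesis
  proof (rule summable_comparison_test')
    show "summable (\<lambda>n. 2 powr (2 * C) * real n powr - (1 + 3 * \<epsilon> / 4))"
      using eps_pos by (intro summable_mult) (simp add: summable_real_powr_iff)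
    show "norm (u n) \<le> 2 powr (2 * C) * real n powr - (1 + 3 * \<epsilon> / 4)" if "1 \<le> n" for n
      using u_le_power[OF that C] by (simp add: u_def)
  qed
qed

lemma norm_b_div_alpha_le_u:
  assumes n: "1 \<le> n" and j: "1 \<le> j" "j \<le> K"
  shows "norm (b j n / \<alpha> j n) \<le> u n"
proof -
  have b_le: "norm (b j n) \<le> 2 powr (lam n powr a)"
    using b_bound n j unfolding lam_def by auto
  have inverse_alpha_le: "1 / norm (\<alpha> j n) \<le> 2 powr (lam n powr a) / 2 powr lam n"
  proof (cases "j = 1")
    case True
    have "1 \<le> 2 powr (lam n powr a)" by (intro ge_one_powr_ge_zero) auto
    then show ?thesis
      using True norm_alpha1_eq[OF n] by (simp add: divide_right_mono)
  next
    case False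
    then have ratio: "2 powr (- (lam n powr a)) < 2 powr lam n / norm (\<alpha> j n)"
      "2 powr lam n / norm (\<alpha> j n) < 2 powr (lam n powr a)"
      using alpha_ratio n j norm_alpha1_eq[OF n] unfolding lam_def by auto
    then have "norm (\<alpha> j n) \<noteq> 0"
      by (metis div_by_0 powr_non_neg)
    then show ?thesis using ratio(2) by (simp add: field_simps)
  qed
  have "norm (b j n / \<alpha> j n) = norm (b j n) * (1 / norm (\<alpha> j n))"
    by (simp add: norm_divide)
  also have "\<dots> \<le> 2 powr (lam n powr a) * (2 powr (lam n powr a) / 2 powr lam n)"
    using b_le inverse_alpha_le by (intro mult_mono) auto
  also have "\<dots> = u n"
    unfolding u_def by (simp add: powr_diff powr_add[symmetric])
  finally show ?thesis .
qed

definition "B = (\<Sum>j=1..K. \<bar>real_of_int (\<beta> j)\<bar>)"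

lemma B_ge_1: "1 \<le> B"
proof -
  obtain j where j: "j \<in> {1..K}" "\<beta> j \<noteq> 0"
    using beta_nonzero by blast
  then have "1 \<le> \<bar>real_of_int (\<beta> j)\<bar>"
    by linarith
  also have "\<dots> \<le> B"
    unfolding B_def using j(1) by (intro member_le_sum) auto
  finally show ?thesis .
qed

lemma summable_u_shift: "summable (\<lambda>m. u (m + N + 1))"
  using summable_u summable_iff_shift[of u "N + 1"] by (simp add: add.assoc)

lemma norm_gamma_le: "norm (gamma K \<beta> b \<alpha> N) \<le> B * (\<Sum>m. u (m + N + 1))"
proof -
  have tail_le: "norm (\<Sum>m. b j (m + N + 1) / \<alpha> j (m + N + 1)) \<le> (\<Sum>m. u (m + N + 1))"
    if "j \<in> {1..K}" for j
    using that by (intro norm_suminf_le summable_u_shift norm_b_div_alpha_le_u) auto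
  have "norm (gamma K \<beta> b \<alpha> N)
      \<le> (\<Sum>j=1..K. norm (of_int (\<beta> j) * (\<Sum>m. b j (m + N + 1) / \<alpha> j (m + N + 1))))"
    unfolding gamma_def by (rule norm_sum)
  also have "\<dots> \<le> (\<Sum>j=1..K. \<bar>real_of_int (\<beta> j)\<bar> * (\<Sum>m. u (m + N + 1)))"
    using tail_le by (intro sum_mono) (auto simp: norm_mult intro: mult_left_mono)
  also have "\<dots> = B * (\<Sum>m. u (m + N + 1))"
    unfolding B_def by (simp add: sum_distrib_right)
  finally show ?thesis .
qed

definition "Z N = real D powr (c * real N) * real (Pprod K d N) powr c"

definition "W N = real (D * Dprod d N) * (Z N + real K * S N)"

lemma weight_eq:
  "(2 powr (real D powr (c * real N) * (\<Prod>i=1..N-1. real (K * Dprod d i + d i) powr c))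
     * (\<Prod>n=1..N. norm (\<alpha> 1 n) ^ K)) ^ (D * Dprod d N) = 2 powr W N"
proof -
  have "(\<Prod>n=1..N. norm (\<alpha> 1 n) ^ K) = (\<Prod>n=1..N. 2 powr (real K * lam n))"
  proof (intro prod.cong refl)
    fix n assume "n \<in> {1..N}"
    then have "norm (\<alpha> 1 n) = 2 powr lam n" by (intro norm_alpha1_eq) simp
    then show "norm (\<alpha> 1 n) ^ K = 2 powr (real K * lam n)" by (simp add: powr_power)
  qed
  also have "\<dots> = 2 powr (real K * S N)"
    unfolding S_def by (simp add: powr_sum sum_distrib_left)
  finally have "(\<Prod>n=1..N. norm (\<alpha> 1 n) ^ K) = 2 powr (real K * S N)" .
  moreover have "(\<Prod>i=1..N-1. real (K * Dprod d i + d i) powr c) = real (Pprod K d N) powr c"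
    unfolding Pprod_def by (simp add: prod_powr_distrib)
  ultimately show ?thesis
    unfolding W_def Z_def by (simp add: powr_add[symmetric] powr_power mult.assoc add.commute)
qed

definition "q = 2 powr (max a c - 1)"

lemma q_pos: "0 < q"
  unfolding q_def by simp

lemma q_less_1: "q < 1"
  unfolding q_def using a_less_c c_less_1 by (intro powr_less_one) auto

lemma half_le_q: "1 / 2 \<le> q"
proof -
  have "2 powr (- 1) \<le> q"
    unfolding q_def using a_pos a_less_c by (intro powr_mono) auto
  then show ?thesis by (simp add: powr_minus_divide)
qed

lemma powr_power_le_q_power: "x \<le> max a c \<Longrightarrow> (2 ^ n) powr (x - 1) \<le> q ^ n"
  unfolding q_def power_powr_commute[of 2, OF zero_le_numeral]
  by (intro power_mono powr_mono) auto

lemma inverse_E_le: "1 / E (Suc N) \<le> q ^ N"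
proof -
  have "1 / E (Suc N) \<le> 1 / 2 ^ N"
    using E_Suc_ge_power[of N] E_ge_1[of "Suc N"] by (intro divide_left_mono) auto
  also have "\<dots> = (1 / 2) ^ N"
    by (simp add: power_divide)
  also have "\<dots> \<le> q ^ N"
    using half_le_q by (intro power_mono) auto
  finally show ?thesis .
qed

lemma E_powr_le: "E (Suc N) powr (a - 1) \<le> q ^ N"
proof -
  have "E (Suc N) powr (a - 1) \<le> (2 ^ N) powr (a - 1)"
    using a_less_c c_less_1 E_Suc_ge_power[of N] by (intro powr_mono2') auto
  also have "\<dots> \<le> q ^ N"
    by (rule powr_power_le_q_power) simp
  finally show ?thesis .
qed

lemma Pprod_powr_le: assumes N: "1 \<le> N" shows "real (Pprod K d N) powr (c - 1) \<le> 2 * q ^ N"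
proof -
  have "2 ^ (N - 1) \<le> real (Pprod K d N)"
    using Pprod_Suc_ge_power[of "N - 1"] N by simp
  then have "real (Pprod K d N) powr (c - 1) \<le> (2 ^ (N - 1)) powr (c - 1)"
    using c_less_1 by (intro powr_mono2') auto
  also have "\<dots> \<le> q ^ (N - 1)"
    by (rule powr_power_le_q_power) simp
  also have "\<dots> \<le> q ^ (N - 1) * (2 * q)"
    using half_le_q q_pos mult_left_mono[of 1 "2 * q" "q ^ (N - 1)"] by simp
  also have "\<dots> = 2 * q ^ N"
    using N by (cases N) simp_all
  finally show ?thesis .
qed

lemma scaled_Z_le:
  assumes N: "1 \<le> N"
  shows "real (D * Dprod d N) * Z N \<le> 2 * q ^ N * E (Suc N)"
proof -
  define P where "P = real (Pprod K d N)"
  define F where "F = real K * real (Dprod d N) + real (d N)"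
  have P_pos: "0 < P"
    unfolding P_def using Pprod_ge_1[OF d_ge_1, of K N] by simp
  have "c * real N \<le> real N"
    using c_less_1 mult_right_mono[of c 1 "real N"] by simp
  then have "real D powr (c * real N) \<le> real D powr real N"
    using D_ge_1 by (intro powr_mono) auto
  then have D_powr_le: "real D powr (c * real N) \<le> real D ^ N"
    using D_ge_1 by (simp add: powr_realpow)
  have "1 * real (Dprod d N) \<le> real K * real (Dprod d N)"
    using K_ge_1 by (intro mult_right_mono) auto
  then have Dprod_le: "real (Dprod d N) \<le> F"
    unfolding F_def by simp
  have "real (D * Dprod d N) * Z N = real D * real (Dprod d N) * (real D powr (c * real N) * P powr c)"
    unfolding Z_def P_def by simp
  also have "\<dots> \<le> real D * F * (real D ^ N * P powr c)"
    using D_powr_le Dprod_le by (intro mult_mono mult_left_mono) auto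
  also have "\<dots> = E (Suc N) * P powr (c - 1)"
  proof -
    have "E (Suc N) = real D ^ N * P * (real D * F)"
      using E_Suc[OF N] unfolding P_def F_def by (simp add: E_def[of N])
    then show ?thesis
      using P_pos by (simp add: powr_diff field_simps)
  qed
  also have "\<dots> \<le> E (Suc N) * (2 * q ^ N)"
    using Pprod_powr_le[OF N] E_ge_1[of "Suc N"] unfolding P_def by (intro mult_left_mono) auto
  finally show ?thesis by (simp add: algebra_simps)
qed

lemma S_plus_W_le: assumes N: "1 \<le> N" shows "S N + W N \<le> E (Suc N) * (s N + 2 * q ^ N)"
proof -
  have "E (Suc N) * s N = real D * (real K * real (Dprod d N) + real (d N)) * S N"
    unfolding s_def E_Suc[OF N] using E_ge_1[of N] by simp
  moreover have "1 + real (D * Dprod d N) * real K \<le> real D * (real K * real (Dprod d N) + real (d N))"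
    using mult_mono[of 1 "real D" 1 "real (d N)"] D_ge_1 d_ge_1 N by (simp add: algebra_simps)
  ultimately have "S N + real (D * Dprod d N) * (real K * S N) \<le> E (Suc N) * s N"
    using S_nonneg[of N] mult_right_mono by (metis distrib_right mult.assoc mult_1)
  then show ?thesis
    unfolding W_def using scaled_Z_le[OF N] by (simp add: algebra_simps)
qed

lemma W_le: assumes "1 \<le> N" shows "W N \<le> E (Suc N) * (s N + 2 * q ^ N)"
  using S_plus_W_le[OF assms] S_nonneg[of N] by linarith

lemma s_Suc_le:
  assumes N: "1 \<le> N"
  shows "s (Suc N) \<le> s N + 2 * q ^ N + (lam (Suc N) - W N) / E (Suc N)"
proof -
  have "(S N + W N) / E (Suc N) \<le> s N + 2 * q ^ N"
    using S_plus_W_le[OF N] E_ge_1[of "Suc N"] by (simp add: divide_le_eq mult.commute)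
  moreover have "s (Suc N) = (S N + W N) / E (Suc N) + (lam (Suc N) - W N) / E (Suc N)"
    unfolding s_def by (simp add: S_def add_divide_distrib diff_divide_distrib)
  ultimately show ?thesis
    by simp
qed

end

section \<open>Descent under a lower bound for the weighted tails\<close>

text \<open>The parameters \<open>C\<close>, \<open>nb\<close> and \<open>Sb\<close> are witnesses for \<open>powr_le_linear_plus_const\<close>
  and \<open>s_bounded\<close>; fixing them once keeps the constants of the estimates below, in particular
  the factor of \<open>q ^ N\<close> in \<open>e N\<close>, independent of \<open>N\<close>.\<close>

locale gamma_lower_bound = gamma_setting +
  fixes \<eta> :: real and N0 :: nat and C :: real and nb :: nat and Sb :: real
  assumes eta_pos: "0 < \<eta>"
    and weighted_gamma_ge: "N0 \<le> N \<Longrightarrow> \<eta> \<le> norm (gamma K \<beta> b \<alpha> N) * 2 powr W N"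
    and sublinear: "\<forall>y\<ge>0. y powr a \<le> \<theta> / 4 * y + C"
    and C_nonneg: "0 \<le> C"
    and s_le_Sb: "nb \<le> n \<Longrightarrow> s n \<le> Sb"
begin

definition "\<omega> m = real (m + 1) powr - (1 + \<epsilon> / 2)"
definition "\<Omega> = (\<Sum>m. \<omega> m)"
definition "c_tail = log 2 (2 * B * \<Omega> / \<eta>)"

definition "large_tail_term N m \<longleftrightarrow>
  lam (m + N + 1) - 2 * lam (m + N + 1) powr a - (1 + \<epsilon> / 2) * log 2 (real (m + 1)) \<le> W N + c_tail"

lemma summable_omega: "summable \<omega>"
  using summable_iff_shift[of "\<lambda>m. real m powr - (1 + \<epsilon> / 2)" 1] eps_pos
  unfolding \<omega>_def by (simp add: summable_real_powr_iff)

lemma Omega_pos: "0 < \<Omega>"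
proof -
  have "\<omega> 0 \<le> \<Omega>"
    unfolding \<Omega>_def using sum_le_suminf[OF summable_omega, of "{0}"] by (simp add: \<omega>_def)
  then show ?thesis by (simp add: \<omega>_def)
qed

lemma u_le_if_not_large_tail_term:
  assumes "\<not> large_tail_term N m"
  shows "u (m + N + 1) \<le> \<omega> m * (\<eta> / (2 * B * \<Omega> * 2 powr W N))"
proof -
  have "2 * lam (m + N + 1) powr a - lam (m + N + 1)
      \<le> - ((1 + \<epsilon> / 2) * log 2 (real (m + 1))) - W N - c_tail"
    using assms unfolding large_tail_term_def by linarith
  then have "u (m + N + 1) \<le> 2 powr (- ((1 + \<epsilon> / 2) * log 2 (real (m + 1))) - W N - c_tail)"
    unfolding u_def by (intro powr_mono) auto
  also have "\<dots> = 2 powr (- (1 + \<epsilon> / 2) * log 2 (real (m + 1))) / 2 powr W N / 2 powr c_tail"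
    by (simp only: powr_diff minus_mult_left)
  also have "2 powr (- (1 + \<epsilon> / 2) * log 2 (real (m + 1))) = \<omega> m"
    unfolding \<omega>_def by (intro powr_log_eq) simp
  also have "2 powr c_tail = 2 * B * \<Omega> / \<eta>"
    unfolding c_tail_def using B_ge_1 Omega_pos eta_pos by simp
  finally show ?thesis
    by (simp add: field_simps)
qed

lemma large_tail_term_exists: assumes "N0 \<le> N" shows "\<exists>m. large_tail_term N m"
proof (rule ccontr)
  assume "\<nexists>m. large_tail_term N m"
  then have "(\<Sum>m. u (m + N + 1)) \<le> (\<Sum>m. \<omega> m * (\<eta> / (2 * B * \<Omega> * 2 powr W N)))"
    using u_le_if_not_large_tail_term summable_omega
    by (intro suminf_le summable_u_shift summable_mult2) auto
  also have "\<dots> = \<Omega> * (\<eta> / (2 * B * \<Omega> * 2 powr W N))"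
    unfolding \<Omega>_def by (rule suminf_mult2[OF summable_omega, symmetric])
  also have "\<dots> = \<eta> / (2 * B) / 2 powr W N"
    using Omega_pos by simp
  finally have tail_le: "B * (\<Sum>m. u (m + N + 1)) * 2 powr W N \<le> \<eta> / 2"
    using B_ge_1 by (simp add: field_simps)
  have "\<eta> \<le> norm (gamma K \<beta> b \<alpha> N) * 2 powr W N"
    by (rule weighted_gamma_ge[OF assms])
  also have "\<dots> \<le> B * (\<Sum>m. u (m + N + 1)) * 2 powr W N"
    using norm_gamma_le by (intro mult_right_mono) auto
  finally show False
    using tail_le eta_pos by linarith
qed

definition "\<Theta> = 2 / \<theta>"
definition "C_lam = \<bar>c_tail\<bar> + 2 * C"

lemma Theta_pos: "0 < \<Theta>"
  unfolding \<Theta>_def using theta_pos by simp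

lemma C_lam_nonneg: "0 \<le> C_lam"
  unfolding C_lam_def using C_nonneg by simp

lemma lam_le_if_large_tail_term:
  assumes "large_tail_term N m"
  shows "lam (m + N + 1) \<le> \<Theta> * (W N + C_lam)"
proof -
  define l where "l = lam (m + N + 1)"
  have l_nonneg: "0 \<le> l"
    unfolding l_def by (intro lam_nonneg) simp
  have "2 * l powr a \<le> \<theta> / 2 * l + 2 * C"
    using sublinear l_nonneg by auto
  moreover have "(1 + \<epsilon> / 2) * log 2 (real (m + 1)) \<le> (1 - \<theta>) * l"
  proof -
    have "(1 + \<epsilon> / 2) * log 2 (real (m + 1)) = (1 - \<theta>) * ((1 + \<epsilon>) * log 2 (real (m + 1)))"
      unfolding \<theta>_def using eps_pos by (simp add: field_simps)
    also have "\<dots> \<le> (1 - \<theta>) * ((1 + \<epsilon>) * log 2 (real (m + N + 1)))"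
      using eps_pos theta_less_1 by (intro mult_left_mono) auto
    also have "\<dots> \<le> (1 - \<theta>) * l"
      unfolding l_def using lam_ge_log[of "m + N + 1"] theta_less_1 by (intro mult_left_mono) auto
    finally show ?thesis .
  qed
  ultimately have "\<theta> / 2 * l \<le> W N + C_lam"
    using assms unfolding large_tail_term_def l_def[symmetric] C_lam_def by (simp add: algebra_simps)
  then have "\<Theta> * (\<theta> / 2 * l) \<le> \<Theta> * (W N + C_lam)"
    using Theta_pos by (intro mult_left_mono) auto
  then show ?thesis
    unfolding l_def \<Theta>_def using theta_pos by simp
qed

definition "G = \<Theta> * (Sb + 2 + C_lam)"
definition "j0 = nat \<lceil>8 * \<Theta> + 4\<rceil>"
definition "c_short = \<bar>c_tail\<bar> + (1 + \<epsilon> / 2) * log 2 (real j0)"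
text \<open>\<open>e N\<close> dominates the error terms \<open>2 * q ^ N\<close>, \<open>C_lam / E (N + 1)\<close>,
  \<open>c_short / E (N + 1)\<close> and \<open>2 * G powr a * E (N + 1) powr (a - 1)\<close> of one step.\<close>

definition "e N = (2 + C_lam + c_short + 2 * G powr a) * q ^ N"
definition "N1 = max (max N0 nb) 1"

lemma G_nonneg: "0 \<le> G"
  unfolding G_def using Theta_pos C_lam_nonneg s_le_Sb[of nb] s_nonneg[of nb] by simp

lemma j0_ge_4: "4 \<le> j0"
  unfolding j0_def using Theta_pos by linarith

lemma c_short_nonneg: "0 \<le> c_short"
proof -
  have "0 \<le> log 2 (real j0)"
    using j0_ge_4 by simp
  then show ?thesis
    unfolding c_short_def using eps_pos by simp
qed

lemma e_nonneg: "0 \<le> e N"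
  unfolding e_def using C_lam_nonneg c_short_nonneg q_pos by simp

lemma W_plus_C_lam_le: assumes N: "1 \<le> N" shows "W N + C_lam \<le> E (Suc N) * (s N + e N)"
proof -
  have "1 \<le> E (Suc N) * q ^ N"
    using inverse_E_le[of N] E_ge_1[of "Suc N"] by (simp add: divide_le_eq mult.commute)
  then have "C_lam * 1 \<le> C_lam * (E (Suc N) * q ^ N)"
    using C_lam_nonneg by (intro mult_left_mono)
  then have "W N + C_lam \<le> E (Suc N) * (s N + 2 * q ^ N) + C_lam * (E (Suc N) * q ^ N)"
    using W_le[OF N] by linarith
  also have "\<dots> = E (Suc N) * (s N + (2 + C_lam) * q ^ N)"
    by (simp add: algebra_simps)
  also have "\<dots> \<le> E (Suc N) * (s N + e N)"
    unfolding e_def using c_short_nonneg G_nonneg q_pos E_ge_1[of "Suc N"]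
    by (intro mult_left_mono add_left_mono mult_right_mono) auto
  finally show ?thesis .
qed

lemma lam_Suc_minus_W_le:
  assumes N: "N1 \<le> N" and m: "m + 1 \<le> j0" and large: "large_tail_term N m"
  shows "lam (Suc N) - W N \<le> c_short + 2 * G powr a * E (Suc N) powr a"
proof -
  define n where "n = m + N + 1"
  define E' where "E' = E (Suc N)"
  have "1 \<le> N" "nb \<le> N"
    using N unfolding N1_def by auto
  have E'_ge_1: "1 \<le> E'"
    unfolding E'_def by (rule E_ge_1)
  have "s N + 2 * q ^ N \<le> Sb + 2"
    using s_le_Sb[OF \<open>nb \<le> N\<close>] q_pos q_less_1 power_le_one[of q N] by simp
  then have "W N \<le> E' * (Sb + 2)"
    using order.trans[OF W_le[OF \<open>1 \<le> N\<close>] mult_left_mono] E'_ge_1 unfolding E'_def by simp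
  moreover have "C_lam \<le> E' * C_lam"
    using E'_ge_1 C_lam_nonneg by (simp add: mult_le_cancel_right1)
  ultimately have "W N + C_lam \<le> E' * (Sb + 2 + C_lam)"
    by (simp add: algebra_simps)
  then have "lam n \<le> \<Theta> * (E' * (Sb + 2 + C_lam))"
    using order.trans[OF lam_le_if_large_tail_term[OF large] mult_left_mono] Theta_pos
    unfolding n_def by simp
  then have "lam n \<le> E' * G"
    unfolding G_def by (simp add: algebra_simps)
  then have "lam n powr a \<le> (E' * G) powr a"
    using lam_nonneg[of n] a_pos unfolding n_def by (intro powr_mono2) auto
  also have "\<dots> = E' powr a * G powr a"
    using E'_ge_1 G_nonneg by (simp add: powr_mult)
  finally have lam_powr_le: "lam n powr a \<le> G powr a * E' powr a"
    by (simp add: mult.commute)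
  have "log 2 (real (m + 1)) \<le> log 2 (real j0)"
    using m by simp
  then have "(1 + \<epsilon> / 2) * log 2 (real (m + 1)) \<le> (1 + \<epsilon> / 2) * log 2 (real j0)"
    using eps_pos by (intro mult_left_mono) auto
  moreover have "lam (Suc N) \<le> lam n"
    unfolding n_def by (intro lam_mono) auto
  ultimately show ?thesis
    using large lam_powr_le unfolding large_tail_term_def c_short_def n_def[symmetric] E'_def
    by linarith
qed

lemma s_Suc_le_short_step:
  assumes N: "N1 \<le> N" and m: "m + 1 \<le> j0" and large: "large_tail_term N m"
  shows "s (Suc N) \<le> s N + e N"
proof -
  define E' where "E' = E (Suc N)"
  have "1 \<le> N"
    using N unfolding N1_def by auto
  have E'_ge_1: "1 \<le> E'"
    unfolding E'_def by (rule E_ge_1)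
  have "(lam (Suc N) - W N) / E' \<le> (c_short + 2 * G powr a * E' powr a) / E'"
    using lam_Suc_minus_W_le[OF assms] E'_ge_1 unfolding E'_def by (intro divide_right_mono) auto
  also have "\<dots> = c_short * (1 / E') + 2 * G powr a * E' powr (a - 1)"
    using E'_ge_1 by (simp add: add_divide_distrib powr_diff)
  also have "\<dots> \<le> c_short * q ^ N + 2 * G powr a * q ^ N"
    using inverse_E_le[of N] E_powr_le[of N] c_short_nonneg unfolding E'_def
    by (intro add_mono mult_left_mono) auto
  finally have "(lam (Suc N) - W N) / E' \<le> (c_short + 2 * G powr a) * q ^ N"
    by (simp add: algebra_simps)
  moreover have "(2 + c_short + 2 * G powr a) * q ^ N \<le> e N"
    unfolding e_def using C_lam_nonneg q_pos by (intro mult_right_mono) auto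
  ultimately show ?thesis
    using s_Suc_le[OF \<open>1 \<le> N\<close>] unfolding E'_def by (simp add: algebra_simps)
qed

lemma s_le_long_step:
  assumes N: "N1 \<le> N" and large: "large_tail_term N m" and r: "1 \<le> r" "r \<le> m + 1"
  shows "s (N + r) \<le> (s N + e N) * ((1/2 + real r * \<Theta>) / 2 ^ (r - 1))"
proof -
  define n where "n = m + N + 1"
  define E' where "E' = E (Suc N)"
  have "1 \<le> N"
    using N unfolding N1_def by auto
  have E'_ge_1: "1 \<le> E'"
    unfolding E'_def by (rule E_ge_1)
  have lam_n_le: "lam n \<le> \<Theta> * (E' * (s N + e N))"
    using order.trans[OF lam_le_if_large_tail_term[OF large] mult_left_mono[OF W_plus_C_lam_le[OF \<open>1 \<le> N\<close>]]]
      Theta_pos unfolding n_def E'_def by simp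
  have "S (N + r) \<le> S N + real r * lam n"
    using S_add_le[of r "m + 1" N] r unfolding n_def by (simp add: ac_simps)
  moreover have "S N \<le> s N * E' / 2"
    using mult_left_mono[OF E_double[OF \<open>1 \<le> N\<close>] S_nonneg[of N]] E_ge_1[of N]
    unfolding s_def E'_def by (simp add: field_simps)
  moreover have "s N * E' / 2 \<le> (s N + e N) * E' / 2"
    using e_nonneg[of N] E'_ge_1 by (intro divide_right_mono mult_right_mono) auto
  ultimately have S_le: "S (N + r) \<le> E' * (s N + e N) * (1/2 + real r * \<Theta>)"
    using mult_left_mono[OF lam_n_le, of "real r"] by (simp add: algebra_simps)
  have E_le: "2 ^ (r - 1) * E' \<le> E (N + r)"
    using E_shift[of "Suc N" "r - 1"] r unfolding E'_def by simp
  have "s (N + r) \<le> S (N + r) / (2 ^ (r - 1) * E')"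
    unfolding s_def using S_nonneg E_le E'_ge_1 E_ge_1[of "N + r"] by (intro divide_left_mono) auto
  also have "\<dots> \<le> E' * (s N + e N) * (1/2 + real r * \<Theta>) / (2 ^ (r - 1) * E')"
    using S_le E'_ge_1 by (intro divide_right_mono) auto
  also have "\<dots> = (s N + e N) * ((1/2 + real r * \<Theta>) / 2 ^ (r - 1))"
    using E'_ge_1 by (simp add: field_simps)
  finally show ?thesis .
qed

lemma long_descent_step:
  assumes N: "N1 \<le> N" and large: "large_tail_term N m" and m: "j0 < m + 1"
  shows "\<forall>r\<in>{1..m + 1}. s (N + r) \<le> (1 + \<Theta>) * (s N + e N)"
    and "s (N + (m + 1)) \<le> (s N + e N) / 4"
proof -
  have se: "0 \<le> s N + e N"
    using s_nonneg e_nonneg by (simp add: add_nonneg_nonneg)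
  show "\<forall>r\<in>{1..m + 1}. s (N + r) \<le> (1 + \<Theta>) * (s N + e N)"
  proof
    fix r assume r: "r \<in> {1..m + 1}"
    have "s (N + r) \<le> (s N + e N) * ((1/2 + real r * \<Theta>) / 2 ^ (r - 1))"
      using s_le_long_step[OF N large] r by simp
    also have "\<dots> \<le> (s N + e N) * (1 + \<Theta>)"
      using half_plus_mult_div_pow2_le[of \<Theta> r] Theta_pos se r by (intro mult_left_mono) auto
    finally show "s (N + r) \<le> (1 + \<Theta>) * (s N + e N)"
      by (simp add: mult.commute)
  qed
  have "8 * \<Theta> + 4 \<le> real (m + 1)"
    using m unfolding j0_def by linarith
  then have "(1/2 + real (m + 1) * \<Theta>) / 2 ^ (m + 1 - 1) \<le> 1/4"
    using Theta_pos by (intro half_plus_mult_div_pow2_le_quarter) auto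
  then have "(s N + e N) * ((1/2 + real (m + 1) * \<Theta>) / 2 ^ (m + 1 - 1)) \<le> (s N + e N) * (1/4)"
    using se by (rule mult_left_mono)
  with s_le_long_step[OF N large le_add2 order.refl]
  have "s (N + (m + 1)) \<le> (s N + e N) * (1/4)"
    by (rule order.trans)
  then show "s (N + (m + 1)) \<le> (s N + e N) / 4"
    by simp
qed

lemma descent_step:
  assumes N: "N1 \<le> N"
  shows "\<exists>j\<ge>1. (\<forall>r\<in>{1..j}. s (N + r) \<le> (1 + \<Theta>) * (s N + e N))
    \<and> s (N + j) \<le> s N + e N \<and> (j \<noteq> 1 \<longrightarrow> s (N + j) \<le> (s N + e N) / 4)"
proof -
  obtain m where large: "large_tail_term N m"
    using large_tail_term_exists N unfolding N1_def by auto
  have se: "0 \<le> s N + e N"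
    using s_nonneg e_nonneg by (simp add: add_nonneg_nonneg)
  show ?thesis
  proof (cases "m + 1 \<le> j0")
    case True
    have "s (N + 1) \<le> s N + e N"
      using s_Suc_le_short_step[OF N True large] by simp
    moreover have "s N + e N \<le> (1 + \<Theta>) * (s N + e N)"
      using mult_right_mono[of 1 "1 + \<Theta>" "s N + e N"] se Theta_pos by simp
    ultimately show ?thesis
      by (intro exI[of _ 1]) auto
  next
    case False
    then have "m + 1 \<noteq> 1"
      using j0_ge_4 by simp
    then show ?thesis
      using long_descent_step[OF N large] False se by (intro exI[of _ "m + 1"]) auto
  qed
qed

theorem convergent_s: "convergent s"
proof (rule convergent_by_stepwise_descent)
  show "e (Suc n) \<le> q * e n" for n
    unfolding e_def by simp
  show "\<exists>j\<ge>1. (\<forall>r\<in>{1..j}. s (N + r) \<le> (1 + \<Theta>) * (s N + e N))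
    \<and> s (N + j) \<le> s N + e N \<and> (j \<noteq> 1 \<longrightarrow> s (N + j) \<le> (s N + e N) / 4)" if "N1 \<le> N" for N
    by (rule descent_step[OF that])
qed (use s_nonneg e_nonneg q_pos q_less_1 Theta_pos in auto)

end

context gamma_setting
begin

lemma frequently_weighted_gamma_less:
  assumes "0 < \<eta>"
  shows "\<exists>\<^sub>F N in sequentially. norm (gamma K \<beta> b \<alpha> N) * 2 powr W N < \<eta>"
proof (rule ccontr)
  assume "\<not> ?thesis"
  then obtain N0 where N0: "\<And>N. N0 \<le> N \<Longrightarrow> \<eta> \<le> norm (gamma K \<beta> b \<alpha> N) * 2 powr W N"
    by (auto simp: not_frequently eventually_at_top_linorder not_less)
  obtain C where C: "0 \<le> C" "\<forall>y\<ge>0. y powr a \<le> \<theta> / 4 * y + C"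
    using powr_le_linear_plus_const[of a "\<theta> / 4"] a_pos a_less_c c_less_1 theta_pos by auto
  obtain nb Sb where Sb: "\<And>n. nb \<le> n \<Longrightarrow> s n \<le> Sb"
    using s_bounded by blast
  interpret gamma_lower_bound D K a \<epsilon> c d \<alpha> b \<beta> \<eta> N0 C nb Sb
    using assms N0 C Sb
    by (intro gamma_lower_bound.intro gamma_setting_axioms gamma_lower_bound_axioms.intro) auto
  show False
    using convergent_s not_convergent_s by blast
qed

end

theorem lemma3p2:
  fixes D K :: nat and A1 A2 a \<epsilon> c :: real
    and d :: "nat \<Rightarrow> nat"
    and \<alpha> b :: "nat \<Rightarrow> nat \<Rightarrow> complex"
    and \<beta> :: "nat \<Rightarrow> int"
  assumes DK: "D \<ge> 1" "K \<ge> 1"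
    and pos: "a > 0" "\<epsilon> > 0" "A1 > 0" "A2 > 0"
    and ord: "a < 1" "1 \<le> A1" "A1 < A2"
    and d_nat: "\<forall>n\<ge>1. d n \<ge> 1"
    and h1: "\<forall>n\<ge>1. norm (\<alpha> 1 n) < norm (\<alpha> 1 (n + 1))"
    and h2: "\<forall>n\<ge>1. norm (\<alpha> 1 n) \<ge> real n powr (1 + \<epsilon>)"
    and h3: "liminf (\<lambda>n. ereal (norm (\<alpha> 1 n) powr (1 / (real D ^ n * real (Pprod K d n))))) = ereal A1"
    and h4: "limsup (\<lambda>n. ereal (norm (\<alpha> 1 n) powr (1 / (real D ^ n * real (Pprod K d n))))) = ereal A2"
    and h5: "\<forall>n\<ge>1. \<forall>i. 1 < i \<and> i \<le> K \<longrightarrow>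
               2 powr (- ((log 2 (norm (\<alpha> 1 n))) powr a)) < norm (\<alpha> 1 n) / norm (\<alpha> i n) \<and>
               norm (\<alpha> 1 n) / norm (\<alpha> i n) < 2 powr ((log 2 (norm (\<alpha> 1 n))) powr a)"
    and h6: "\<forall>n\<ge>1. \<forall>i. 1 \<le> i \<and> i \<le> K \<longrightarrow>
               norm (b i n) \<le> 2 powr ((log 2 (norm (\<alpha> 1 n))) powr a)"
    and hbeta: "\<exists>j\<in>{1..K}. \<beta> j \<noteq> 0"
    and hc: "a < c" "c < 1"
  shows "liminf (\<lambda>N. ereal (norm (gamma K \<beta> b \<alpha> N) *
            (2 powr (real D powr (c * real N) * (\<Prod>i=1..N-1. real (K * Dprod d i + d i) powr c))
             * (\<Prod>n=1..N. norm (\<alpha> 1 n) ^ K)) ^ (D * Dprod d N))) = 0"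
proof -
  interpret gamma_setting D K a \<epsilon> c d \<alpha> b \<beta>
    by (unfold_locales, unfold h3 h4) (fact DK pos ord d_nat h1 h2 h5 h6 hbeta hc | simp add: ord)+
  have "liminf (\<lambda>N. ereal (norm (gamma K \<beta> b \<alpha> N) * 2 powr W N)) = 0"
    by (rule liminf_eq_0_if_frequently_less) (simp_all add: frequently_weighted_gamma_less)
  then show ?thesis
    by (simp only: weight_eq)
qed

end
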